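(* There exist absolute constants $N_0\ge1$ and $C>0$ such that the following holds. Let $c_*\ge N_0$, $T>1$, and let $B\subset\mathbb{R}^3$ be a ball of radius $c_*/100$ (arbitrary center). Set $$V=\{(\xi,n)\in\mathbb{R}^2\times\mathbb{Z}:\ c_*-1\le|(\xi,n)|\le c_*+1\}\cap B,$$ and for $a,b\in V$ set $$U=U_{a,b}=\{\zeta\in\mathbb{R}^3:\ c_*-1\le|\zeta|\le c_*+1,\ |(\zeta-a)\cdot(\zeta-b)|\le \tfrac1T\}.$$ Then for all $a,b\in V$, $$\sum_{n\in\mathbb{Z}}\int_{\mathbb{R}^2}\mathbf{1}_U(\xi,n)\,d\xi\le \frac{C}{T}.$$
   Context: $\mathbb{R}^2\times\mathbb{Z}$ is viewed as a subset of $\mathbb{R}^3$, and $|\cdot|$, $\cdot$ denote the Euclidean norm and inner product on $\mathbb{R}^3$. *)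

theory Defs
  imports "HOL-Analysis.Analysis"
begin

text \<open>R^3 is modelled as the Euclidean space (real \<times> real) \<times> real, so that
  R^2 \<times> Z sits inside it as points (xi, of_int n).\<close>

definition Vset :: "real \<Rightarrow> ((real \<times> real) \<times> real) \<Rightarrow> ((real \<times> real) \<times> real) set" where
  "Vset cs ctr = {p. snd p \<in> \<int> \<and> cs - 1 \<le> norm p \<and> norm p \<le> cs + 1} \<inter> cball ctr (cs / 100)"

definition Uset :: "real \<Rightarrow> real \<Rightarrow> ((real \<times> real) \<times> real) \<Rightarrow> ((real \<times> real) \<times> real)
    \<Rightarrow> ((real \<times> real) \<times> real) set" where
  "Uset cs T a b = {z. cs - 1 \<le> norm z \<and> norm z \<le> cs + 1 \<and> \<bar>(z - a) \<bullet> (z - b)\<bar> \<le> 1 / T}"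

end

theory Submission
  imports Defs
begin

(* Let m be the midpoint of a and b, e = m / |m| and r^2 = |a - b|^2 / 4.  The identities
     (z - a) \<bullet> (z - b) = |z - m|^2 - r^2,
     4 m \<bullet> (z - m) = 2 |z|^2 - |a|^2 - |b|^2 - 2 (z - a) \<bullet> (z - b)
   and |m| \<ge> c_*/2 show that z - m lies in the shell slab
   {w. ||w|^2 - r^2| \<le> 1/T \<and> |e \<bullet> w| \<le> 5} for every z in U.
   A horizontal slice of this shell slab at height t is an annulus of area 2 pi / T
   cut by a strip of width 10/p, where p is the length of the horizontal part of e.
   After a shear the strip becomes a band whose fibers are chords of the annulus.  With
   Lambda = p sqrt (r^2 + 1/T - 25), the chords at depth d = Lambda - 5 |e_3| - |t| > 0
   have length O(p / (T sqrt (Lambda d))), so the slice has area O(1 / (T sqrt (Lambda d)));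
   and the slice is empty once |t| > Lambda + 5 |e_3| + 5.  On either side of the centre
   the depths at integer heights are 1-separated and at most Lambda, so their inverse
   square roots sum to at most 4 sqrt Lambda: the central slices contribute O(1/T), and
   the boundedly many remaining ones at most 2 pi / T each. *)

section \<open>Sums of inverse square roots\<close>

lemma sum_inverse_sqrt_le: "(\<Sum>k=1..K. 1 / sqrt (real k)) \<le> 2 * sqrt (real K)"
proof (induction K)
  case (Suc K)
  have "sqrt (real K) * sqrt (real (Suc K)) \<le> real K + 1/2"
  proof -
    have "sqrt (real K) * sqrt (real (Suc K)) = sqrt (real K * real (Suc K))"
      by (simp add: real_sqrt_mult)
    also have "\<dots> \<le> sqrt ((real K + 1/2)^2)"
      by (rule real_sqrt_le_mono) (simp add: power2_eq_square algebra_simps)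
    finally show ?thesis by simp
  qed
  then have "1 / sqrt (real (Suc K)) \<le> 2 * sqrt (real (Suc K)) - 2 * sqrt (real K)"
    by (simp add: field_simps)
  with Suc show ?case by simp
qed simp

lemma sum_inverse_sqrt_separated_le:
  fixes x :: "'a \<Rightarrow> real"
  assumes "finite N" "0 \<le> \<Lambda>"
    and sep: "\<And>i j. i \<in> N \<Longrightarrow> j \<in> N \<Longrightarrow> i \<noteq> j \<Longrightarrow> 1 \<le> \<bar>x i - x j\<bar>"
    and x: "\<And>i. i \<in> N \<Longrightarrow> 1 \<le> x i \<and> x i \<le> \<Lambda>"
  shows "(\<Sum>i\<in>N. 1 / sqrt (x i)) \<le> 2 * sqrt \<Lambda>"
proof -
  define k where "k i = nat \<lfloor>x i\<rfloor>" for i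
  have k_le: "1 \<le> k i \<and> real (k i) \<le> x i \<and> k i \<le> nat \<lfloor>\<Lambda>\<rfloor>" if "i \<in> N" for i
  proof -
    have "1 \<le> x i" "x i \<le> \<Lambda>" using x[OF that] by auto
    moreover have "real_of_int \<lfloor>x i\<rfloor> \<le> x i" by (rule of_int_floor_le)
    moreover have "\<lfloor>x i\<rfloor> \<le> \<lfloor>\<Lambda>\<rfloor>" using \<open>x i \<le> \<Lambda>\<close> by (rule floor_mono)
    ultimately show ?thesis unfolding k_def by (simp add: le_nat_iff le_floor_iff nat_mono)
  qed
  have "inj_on k N"
  proof (rule inj_onI)
    fix i j assume "i \<in> N" "j \<in> N" "k i = k j"
    moreover have "0 \<le> \<lfloor>x i\<rfloor>" "0 \<le> \<lfloor>x j\<rfloor>" using x \<open>i \<in> N\<close> \<open>j \<in> N\<close> by fastforce+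
    ultimately have "\<lfloor>x i\<rfloor> = \<lfloor>x j\<rfloor>" by (simp only: k_def eq_nat_nat_iff)
    then have "\<bar>x i - x j\<bar> < 1" by linarith
    then show "i = j" using sep[OF \<open>i \<in> N\<close> \<open>j \<in> N\<close>] by linarith
  qed
  have "(\<Sum>i\<in>N. 1 / sqrt (x i)) \<le> (\<Sum>i\<in>N. 1 / sqrt (real (k i)))"
  proof (rule sum_mono)
    fix i assume "i \<in> N"
    then have "1 \<le> real (k i)" "real (k i) \<le> x i" using k_le by auto
    then show "1 / sqrt (x i) \<le> 1 / sqrt (real (k i))"
      by (intro divide_left_mono real_sqrt_le_mono mult_pos_pos) auto
  qed
  also have "\<dots> = (\<Sum>j\<in>k ` N. 1 / sqrt (real j))"
    by (simp add: sum.reindex[OF \<open>inj_on k N\<close>])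
  also have "\<dots> \<le> (\<Sum>j=1..nat \<lfloor>\<Lambda>\<rfloor>. 1 / sqrt (real j))"
    using k_le by (intro sum_mono2) auto
  also have "\<dots> \<le> 2 * sqrt (real (nat \<lfloor>\<Lambda>\<rfloor>))" by (rule sum_inverse_sqrt_le)
  also have "\<dots> \<le> 2 * sqrt \<Lambda>"
    using \<open>0 \<le> \<Lambda>\<close> by simp
  finally show ?thesis .
qed

lemma sum_inverse_sqrt_dist_le:
  fixes N :: "int set"
  assumes "finite N" "0 \<le> \<Lambda>" "D \<le> \<Lambda>"
    and N: "\<And>n. n \<in> N \<Longrightarrow> 1 \<le> D - \<bar>real_of_int n - s\<bar>"
  shows "(\<Sum>n\<in>N. 1 / sqrt (D - \<bar>real_of_int n - s\<bar>)) \<le> 4 * sqrt \<Lambda>"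
proof -
  define x where "x n = D - \<bar>real_of_int n - s\<bar>" for n
  let ?U = "{n\<in>N. s \<le> real_of_int n}" and ?L = "{n\<in>N. real_of_int n < s}"
  have bounds: "1 \<le> x n \<and> x n \<le> \<Lambda>" if "n \<in> N" for n
    using N[OF that] \<open>D \<le> \<Lambda>\<close> unfolding x_def by auto
  have "1 \<le> \<bar>x n - x n'\<bar>" if "n \<in> ?U \<and> n' \<in> ?U \<or> n \<in> ?L \<and> n' \<in> ?L" "n \<noteq> n'" for n n'
  proof -
    have "\<bar>x n - x n'\<bar> = \<bar>real_of_int (n - n')\<bar>" using that(1) unfolding x_def by auto
    then show ?thesis using \<open>n \<noteq> n'\<close> by linarith
  qed
  then have "(\<Sum>n\<in>?U. 1 / sqrt (x n)) \<le> 2 * sqrt \<Lambda>" "(\<Sum>n\<in>?L. 1 / sqrt (x n)) \<le> 2 * sqrt \<Lambda>"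
    using bounds \<open>finite N\<close> \<open>0 \<le> \<Lambda>\<close> by (auto intro!: sum_inverse_sqrt_separated_le)
  moreover have "(\<Sum>n\<in>N. 1 / sqrt (x n)) = (\<Sum>n\<in>?U. 1 / sqrt (x n)) + (\<Sum>n\<in>?L. 1 / sqrt (x n))"
    using \<open>finite N\<close> by (subst sum.union_disjoint[symmetric]) (auto intro: sum.cong)
  ultimately show ?thesis unfolding x_def by linarith
qed

lemma finite_int_abs_le: "finite {n::int. \<bar>real_of_int n - s\<bar> \<le> B}"
  by (rule finite_subset[of _ "{\<lfloor>s - B\<rfloor>..\<lceil>s + B\<rceil>}"]) (auto simp: abs_le_iff floor_le_iff le_ceiling_iff)

lemma card_int_interval_le:
  assumes "0 \<le> L"
  shows "real (card {n::int. x \<le> real_of_int n \<and> real_of_int n \<le> x + L}) \<le> L + 1"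
proof -
  have "{n::int. x \<le> real_of_int n \<and> real_of_int n \<le> x + L} = {\<lceil>x\<rceil>..\<lfloor>x + L\<rfloor>}"
    by (auto simp: ceiling_le_iff le_floor_iff)
  moreover have "real_of_int (\<lfloor>x + L\<rfloor> + 1 - \<lceil>x\<rceil>) \<le> L + 1"
    using floor_le_ceiling[of x] of_int_floor_le[of "x + L"] le_of_int_ceiling[of x] by linarith
  ultimately show ?thesis using assms by (simp add: of_nat_diff)
qed

lemma card_int_abs_band_le:
  assumes "0 \<le> L"
  shows "real (card {n::int. A \<le> \<bar>real_of_int n - s\<bar> \<and> \<bar>real_of_int n - s\<bar> \<le> A + L}) \<le> 2 * (L + 1)"
proof -
  let ?P = "{n::int. s + A \<le> real_of_int n \<and> real_of_int n \<le> (s + A) + L}"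
  let ?N = "{n::int. s - A - L \<le> real_of_int n \<and> real_of_int n \<le> (s - A - L) + L}"
  have "finite ?P" "finite ?N"
    by (auto intro: finite_subset[OF _ finite_int_abs_le[of s "\<bar>A\<bar> + \<bar>L\<bar>"]])
  then have "card {n::int. A \<le> \<bar>real_of_int n - s\<bar> \<and> \<bar>real_of_int n - s\<bar> \<le> A + L} \<le> card (?P \<union> ?N)"
    by (intro card_mono) (auto simp: abs_if)
  also have "\<dots> \<le> card ?P + card ?N" by (rule card_Un_le)
  finally have "real (card {n::int. A \<le> \<bar>real_of_int n - s\<bar> \<and> \<bar>real_of_int n - s\<bar> \<le> A + L})
      \<le> real (card ?P) + real (card ?N)"
    using of_nat_mono by fastforce
  also have "\<dots> \<le> (L + 1) + (L + 1)"
    by (intro add_mono card_int_interval_le assms)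
  finally show ?thesis by simp
qed

section \<open>Lebesgue measure on the line and in the plane\<close>

lemma emeasure_lborel_translate:
  fixes c :: "'a::euclidean_space"
  assumes "A \<in> sets borel"
  shows "emeasure lborel {x. x - c \<in> A} = emeasure lborel A"
proof -
  have "emeasure lborel A = emeasure (distr lborel borel ((+) (- c))) A"
    by (simp only: lborel_distr_plus)
  also have "\<dots> = emeasure lborel ((+) (- c) -` A \<inter> space lborel)"
    using assms by (intro emeasure_distr) simp_all
  also have "(+) (- c) -` A \<inter> space lborel = {x. x - c \<in> A}"
    by auto
  finally show ?thesis ..
qed

lemma emeasure_lborel_swap:
  fixes A :: "('a::euclidean_space \<times> 'b::euclidean_space) set"
  assumes "A \<in> sets borel"
  shows "emeasure lborel {(y, x). (x, y) \<in> A} = emeasure lborel A"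
proof -
  have "A \<in> sets (lborel \<Otimes>\<^sub>M lborel)" using assms by (simp only: lborel_prod sets_lborel)
  have "emeasure lborel A = emeasure (lborel \<Otimes>\<^sub>M lborel) A" by (simp only: lborel_prod)
  also have "\<dots> = emeasure (distr (lborel \<Otimes>\<^sub>M lborel) (lborel \<Otimes>\<^sub>M lborel) (\<lambda>(y, x). (x, y))) A"
    by (subst lborel_pair.distr_pair_swap) (rule refl)
  also have "\<dots> = emeasure (lborel \<Otimes>\<^sub>M lborel) ((\<lambda>(y, x). (x, y)) -` A \<inter> space (lborel \<Otimes>\<^sub>M lborel))"
    using measurable_pair_swap' \<open>A \<in> sets (lborel \<Otimes>\<^sub>M lborel)\<close> by (rule emeasure_distr)
  also have "(\<lambda>(y, x). (x, y)) -` A \<inter> space (lborel \<Otimes>\<^sub>M lborel) = {(y, x). (x, y) \<in> A}"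
    by (auto simp: space_pair_measure)
  finally show ?thesis by (simp only: lborel_prod)
qed

lemma emeasure_abs_affine_band:
  fixes \<alpha> c L :: real
  assumes "\<alpha> \<noteq> 0" "L \<ge> 0"
  shows "emeasure lborel {y. \<bar>\<alpha> * y + c\<bar> \<le> L} = ennreal (2 * L / \<bar>\<alpha>\<bar>)"
proof -
  have "\<bar>\<alpha> * y + c\<bar> \<le> L \<longleftrightarrow> \<bar>y + c / \<alpha>\<bar> \<le> L / \<bar>\<alpha>\<bar>" for y
  proof -
    have "\<bar>\<alpha> * y + c\<bar> = \<bar>\<alpha>\<bar> * \<bar>y + c / \<alpha>\<bar>"
      using assms by (simp add: abs_mult[symmetric] distrib_left)
    then show ?thesis using assms by (simp add: pos_le_divide_eq mult.commute)
  qed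
  also have "\<bar>y + c / \<alpha>\<bar> \<le> L / \<bar>\<alpha>\<bar> \<longleftrightarrow> y \<in> {- c / \<alpha> - L / \<bar>\<alpha>\<bar> .. - c / \<alpha> + L / \<bar>\<alpha>\<bar>}" for y
    by (simp only: abs_le_iff atLeastAtMost_iff) linarith
  finally have "{y. \<bar>\<alpha> * y + c\<bar> \<le> L} = {- c / \<alpha> - L / \<bar>\<alpha>\<bar> .. - c / \<alpha> + L / \<bar>\<alpha>\<bar>}"
    by blast
  then show ?thesis using assms by simp
qed

lemma emeasure_quadratic_shell_le:
  fixes \<sigma> K \<delta> z0 :: real
  assumes "\<sigma> > 0" "K > 0" "\<delta> \<ge> 0"
  shows "emeasure lborel {z. K - \<delta> \<le> \<sigma> * (z - z0)^2 \<and> \<sigma> * (z - z0)^2 \<le> K}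
     \<le> ennreal (2 * \<delta> / (sqrt \<sigma> * sqrt K))"
proof -
  define b where "b = sqrt (K / \<sigma>)"
  define a where "a = sqrt (max (K - \<delta>) 0 / \<sigma>)"
  have "0 \<le> a" "a \<le> b" "0 < b"
    unfolding a_def b_def using assms by (auto intro!: real_sqrt_le_mono divide_right_mono)
  have "{z. K - \<delta> \<le> \<sigma> * (z - z0)^2 \<and> \<sigma> * (z - z0)^2 \<le> K} \<subseteq> {z0 - b..z0 - a} \<union> {z0 + a..z0 + b}"
  proof
    fix z assume "z \<in> {z. K - \<delta> \<le> \<sigma> * (z - z0)^2 \<and> \<sigma> * (z - z0)^2 \<le> K}"
    then have "max (K - \<delta>) 0 / \<sigma> \<le> (z - z0)^2" "(z - z0)^2 \<le> K / \<sigma>"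
      using assms by (auto simp: field_simps)
    then have "a \<le> sqrt ((z - z0)^2)" "sqrt ((z - z0)^2) \<le> b"
      unfolding a_def b_def by (simp_all only: real_sqrt_le_mono)
    then have "a \<le> \<bar>z - z0\<bar>" "\<bar>z - z0\<bar> \<le> b" by simp_all
    then show "z \<in> {z0 - b..z0 - a} \<union> {z0 + a..z0 + b}" by (cases "z \<ge> z0") auto
  qed
  then have "emeasure lborel {z. K - \<delta> \<le> \<sigma> * (z - z0)^2 \<and> \<sigma> * (z - z0)^2 \<le> K}
      \<le> emeasure lborel ({z0 - b..z0 - a} \<union> {z0 + a..z0 + b})"
    by (rule emeasure_mono) simp
  also have "\<dots> \<le> emeasure lborel {z0 - b..z0 - a} + emeasure lborel {z0 + a..z0 + b}"
    by (rule emeasure_subadditive) auto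
  also have "\<dots> = ennreal (2 * (b - a))"
    using \<open>a \<le> b\<close> by (simp flip: ennreal_plus)
  also have "\<dots> \<le> ennreal (2 * \<delta> / (sqrt \<sigma> * sqrt K))"
  proof (rule ennreal_leI)
    have "(b - a) * b \<le> (b - a) * (b + a)"
      using \<open>0 \<le> a\<close> \<open>a \<le> b\<close> by (intro mult_left_mono) auto
    also have "\<dots> = K / \<sigma> - max (K - \<delta>) 0 / \<sigma>"
      unfolding a_def b_def using assms by (simp add: algebra_simps power2_eq_square[symmetric])
    also have "\<dots> \<le> \<delta> / \<sigma>"
      using assms by (simp add: diff_divide_distrib[symmetric] divide_right_mono)
    finally have "b - a \<le> \<delta> / \<sigma> / b" using \<open>0 < b\<close> by (subst pos_le_divide_eq) auto
    also have "\<delta> / \<sigma> / b = \<delta> / (sqrt \<sigma> * sqrt K)"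
      unfolding b_def using assms by (simp add: real_sqrt_divide field_simps)
    finally show "2 * (b - a) \<le> 2 * \<delta> / (sqrt \<sigma> * sqrt K)" by simp
  qed
  finally show ?thesis .
qed

lemma emeasure_planar_annulus_le:
  fixes \<rho> \<epsilon> :: real
  assumes "\<epsilon> \<ge> 0"
  shows "emeasure lborel {x :: real \<times> real. \<bar>(norm x)^2 - \<rho>\<bar> \<le> \<epsilon>} \<le> ennreal (2 * pi * \<epsilon>)"
proof -
  define r1 where "r1 = sqrt (max (\<rho> + \<epsilon>) 0)"
  define r0 where "r0 = sqrt (max (\<rho> - \<epsilon>) 0)"
  have "0 \<le> r0" "r0 \<le> r1" "0 \<le> r1"
    unfolding r0_def r1_def using assms by (auto intro!: real_sqrt_le_mono)
  have disc: "emeasure lborel (cball (0 :: real \<times> real) r) = ennreal (pi * r^2)"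
    "emeasure lborel (ball (0 :: real \<times> real) r) = ennreal (pi * r^2)" if "r \<ge> 0" for r
    using emeasure_cball[OF that, of "0 :: real \<times> real"] emeasure_ball[OF that, of "0 :: real \<times> real"]
    by (simp_all add: eval_unit_ball_vol power2_eq_square)
  have "{x :: real \<times> real. \<bar>(norm x)^2 - \<rho>\<bar> \<le> \<epsilon>} \<subseteq> cball 0 r1 - ball 0 r0"
  proof
    fix x :: "real \<times> real" assume "x \<in> {x. \<bar>(norm x)^2 - \<rho>\<bar> \<le> \<epsilon>}"
    then have "max (\<rho> - \<epsilon>) 0 \<le> (norm x)^2" "(norm x)^2 \<le> max (\<rho> + \<epsilon>) 0"
      by (auto simp: abs_le_iff)
    then have "r0 \<le> sqrt ((norm x)^2)" "sqrt ((norm x)^2) \<le> r1"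
      unfolding r0_def r1_def by (simp_all only: real_sqrt_le_mono)
    then have "r0 \<le> norm x" "norm x \<le> r1" by simp_all
    then show "x \<in> cball 0 r1 - ball 0 r0" by simp
  qed
  then have "emeasure lborel {x :: real \<times> real. \<bar>(norm x)^2 - \<rho>\<bar> \<le> \<epsilon>}
      \<le> emeasure lborel (cball (0 :: real \<times> real) r1 - ball 0 r0)"
    by (rule emeasure_mono) simp
  also have "\<dots> = ennreal (pi * r1^2) - ennreal (pi * r0^2)"
    using \<open>0 \<le> r0\<close> \<open>r0 \<le> r1\<close> \<open>0 \<le> r1\<close>
    by (subst emeasure_Diff) (auto simp: disc)
  also have "\<dots> = ennreal (pi * (r1^2 - r0^2))"
    by (simp add: ennreal_minus right_diff_distrib)
  also have "\<dots> \<le> ennreal (2 * pi * \<epsilon>)"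
    unfolding r0_def r1_def using assms by (intro ennreal_leI) (simp add: max_def)
  finally show ?thesis .
qed

lemma emeasure_le_sheared_fibers:
  fixes B :: "(real \<times> real) set" and S :: "real set" and c :: ennreal
  assumes [measurable]: "B \<in> sets borel" "S \<in> sets borel"
    and fiber: "\<And>y. emeasure lborel {z. (y - k * z, z) \<in> B} \<le> c * indicator S y"
  shows "emeasure lborel B \<le> c * emeasure lborel S"
proof -
  have "emeasure lborel B = (\<integral>\<^sup>+x. indicator B x \<partial>(lborel \<Otimes>\<^sub>M lborel))"
    by (simp add: lborel_prod)
  also have "\<dots> = (\<integral>\<^sup>+z. \<integral>\<^sup>+x. indicator B (x, z) \<partial>lborel \<partial>lborel)"
    by (rule lborel_pair.nn_integral_snd[symmetric]) (simp add: lborel_prod)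
  also have "\<dots> = (\<integral>\<^sup>+z. \<integral>\<^sup>+y. indicator B (y - k * z, z) \<partial>lborel \<partial>lborel)"
  proof -
    have "(\<integral>\<^sup>+x. indicator B (x, z) \<partial>lborel) = (\<integral>\<^sup>+y. indicator B (y - k * z, z) \<partial>lborel)" for z
      using nn_integral_real_affine[of "\<lambda>x. indicator B (x, z)" 1 "- k * z"] by simp
    then show ?thesis by simp
  qed
  also have "\<dots> = (\<integral>\<^sup>+y. \<integral>\<^sup>+z. indicator B (y - k * z, z) \<partial>lborel \<partial>lborel)"
    by (rule lborel_pair.Fubini') measurable
  also have "\<dots> = (\<integral>\<^sup>+y. emeasure lborel {z. (y - k * z, z) \<in> B} \<partial>lborel)"
  proof -
    have "(\<lambda>z. indicator B (y - k * z, z)) = (indicator {z. (y - k * z, z) \<in> B} :: real \<Rightarrow> ennreal)" for y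
      by (auto simp: indicator_def)
    then show ?thesis by (simp del: indicator_simps)
  qed
  also have "\<dots> \<le> (\<integral>\<^sup>+y. c * indicator S y \<partial>lborel)"
    by (intro nn_integral_mono fiber)
  also have "\<dots> = c * emeasure lborel S"
    by (simp add: nn_integral_cmult_indicator)
  finally show ?thesis .
qed

section \<open>Shell slabs\<close>

definition shell_slab :: "real \<Rightarrow> real \<Rightarrow> real \<Rightarrow> 'a::real_inner \<Rightarrow> 'a set" where
  "shell_slab r2 \<epsilon> h e = {w. \<bar>(norm w)^2 - r2\<bar> \<le> \<epsilon> \<and> \<bar>e \<bullet> w\<bar> \<le> h}"

lemma closed_shell_slab: "closed (shell_slab r2 \<epsilon> h e)"
  unfolding shell_slab_def by (intro closed_Collect_conj closed_Collect_le continuous_intros)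

lemma mem_shell_slab_Pair:
  fixes e :: "'a::real_inner \<times> real"
  shows "(x, t) \<in> shell_slab r2 \<epsilon> h e \<longleftrightarrow>
    \<bar>(norm x)^2 + t^2 - r2\<bar> \<le> \<epsilon> \<and> \<bar>fst e \<bullet> x + snd e * t\<bar> \<le> h"
  by (simp add: shell_slab_def norm_Pair inner_prod_def)

lemma midpoint_shell_slab:
  fixes a b z :: "'a::real_inner"
  assumes c: "3 \<le> c" and \<epsilon>: "\<epsilon> \<le> 1"
    and a: "c - 1 \<le> norm a" "norm a \<le> c + 1" and b: "c - 1 \<le> norm b" "norm b \<le> c + 1"
    and ab: "norm (a - b) \<le> c / 50"
  shows "c / 2 \<le> norm (midpoint a b)"
    and "\<lbrakk>c - 1 \<le> norm z; norm z \<le> c + 1; \<bar>(z - a) \<bullet> (z - b)\<bar> \<le> \<epsilon>\<rbrakk>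
      \<Longrightarrow> z - midpoint a b \<in> shell_slab ((norm (a - b))^2 / 4) \<epsilon> 5 (sgn (midpoint a b))"
proof -
  define m where "m = midpoint a b"
  have "norm a \<le> norm m + dist a m" by (metis dist_norm norm_triangle_sub)
  moreover have "dist a m = norm (a - b) / 2"
    using dist_midpoint(1)[of a b] unfolding m_def dist_norm .
  ultimately show m_large: "c / 2 \<le> norm (midpoint a b)" using a ab c unfolding m_def by linarith
  assume z: "c - 1 \<le> norm z" "norm z \<le> c + 1" and f: "\<bar>(z - a) \<bullet> (z - b)\<bar> \<le> \<epsilon>"
  have "(z - a) \<bullet> (z - b) = (norm (z - m))^2 - (norm (a - b))^2 / 4"
    unfolding m_def midpoint_def power2_norm_eq_inner
    by (simp add: inner_diff_left inner_diff_right inner_add_left inner_add_right inner_commute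
        algebra_simps) (simp add: field_simps)
  then have shell: "\<bar>(norm (z - m))^2 - (norm (a - b))^2 / 4\<bar> \<le> \<epsilon>" using f by simp
  have "4 * (m \<bullet> (z - m)) = 2 * (norm z)^2 - (norm a)^2 - (norm b)^2 - 2 * ((z - a) \<bullet> (z - b))"
    unfolding m_def midpoint_def power2_norm_eq_inner
    by (simp add: inner_diff_left inner_diff_right inner_add_left inner_add_right inner_commute
        algebra_simps)
  moreover have sq: "(c - 1)^2 \<le> (norm x)^2 \<and> (norm x)^2 \<le> (c + 1)^2"
    if "c - 1 \<le> norm x" "norm x \<le> c + 1" for x :: 'a
    using that c by (intro conjI power_mono) auto
  moreover have "(c + 1)^2 - (c - 1)^2 = 4 * c" by (simp add: power2_eq_square algebra_simps)
  ultimately have "\<bar>4 * (m \<bullet> (z - m))\<bar> \<le> 8 * c + 2 * \<epsilon>"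
    using sq[OF a] sq[OF b] sq[OF z] f by (simp only: abs_le_iff) linarith
  then have "\<bar>m \<bullet> (z - m)\<bar> \<le> 5 * norm m" using m_large \<epsilon> c unfolding m_def by linarith
  moreover have "m \<noteq> 0" using m_large c unfolding m_def by auto
  ultimately have "\<bar>sgn m \<bullet> (z - m)\<bar> \<le> 5"
    by (simp add: sgn_div_norm abs_mult field_simps)
  then show "z - midpoint a b \<in> shell_slab ((norm (a - b))^2 / 4) \<epsilon> 5 (sgn (midpoint a b))"
    using shell unfolding shell_slab_def m_def by simp
qed

lemma shell_slab_height_le:
  fixes e k w :: "'a::real_inner"
  assumes "norm e = 1" "norm k = 1" and w: "w \<in> shell_slab r2 \<epsilon> h e"
  shows "\<bar>k \<bullet> w\<bar> \<le> h * \<bar>e \<bullet> k\<bar> + sqrt (1 - (e \<bullet> k)^2) * sqrt (r2 + \<epsilon>)"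
proof -
  define q where "q = e \<bullet> k"
  have "e \<bullet> e = 1" "k \<bullet> k = 1"
    using assms(1,2) by (simp_all flip: power2_norm_eq_inner)
  then have "(norm (k - q *\<^sub>R e))^2 = 1 - q^2"
    unfolding power2_norm_eq_inner q_def
    by (simp add: inner_diff_left inner_diff_right inner_commute power2_eq_square)
  then have norm_perp: "norm (k - q *\<^sub>R e) = sqrt (1 - q^2)"
    by (metis norm_ge_zero real_sqrt_unique)
  have "(norm w)^2 \<le> r2 + \<epsilon>" using w by (auto simp: shell_slab_def abs_le_iff)
  then have "norm w \<le> sqrt (r2 + \<epsilon>)" using real_sqrt_le_mono by fastforce
  have "\<bar>(k - q *\<^sub>R e) \<bullet> w\<bar> \<le> norm (k - q *\<^sub>R e) * norm w" by (rule Cauchy_Schwarz_ineq2)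
  also have "\<dots> \<le> norm (k - q *\<^sub>R e) * sqrt (r2 + \<epsilon>)"
    using \<open>norm w \<le> sqrt (r2 + \<epsilon>)\<close> by (rule mult_left_mono) simp
  also have "\<dots> = sqrt (1 - q^2) * sqrt (r2 + \<epsilon>)" by (simp only: norm_perp)
  finally have perp: "\<bar>(k - q *\<^sub>R e) \<bullet> w\<bar> \<le> sqrt (1 - q^2) * sqrt (r2 + \<epsilon>)" .
  have "\<bar>q * (e \<bullet> w)\<bar> \<le> \<bar>q\<bar> * h"
    using w unfolding abs_mult shell_slab_def by (intro mult_left_mono) auto
  moreover have "k \<bullet> w = q * (e \<bullet> w) + (k - q *\<^sub>R e) \<bullet> w" by (simp add: inner_diff_left)
  ultimately show ?thesis using perp unfolding q_def by (simp add: mult.commute)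
qed

lemma shell_slab_slice_empty:
  fixes e :: "(real \<times> real) \<times> real"
  assumes "norm e = 1" "h \<ge> 0"
    and far: "norm (fst e) * sqrt (max (r2 + \<epsilon> - h^2) 0) + h * \<bar>snd e\<bar> + h < \<bar>t\<bar>"
  shows "(x, t) \<notin> shell_slab r2 \<epsilon> h e"
proof
  assume "(x, t) \<in> shell_slab r2 \<epsilon> h e"
  define p where "p = norm (fst e)"
  define S where "S = sqrt (max (r2 + \<epsilon> - h^2) 0)"
  have "p^2 + (snd e)^2 = 1"
    using \<open>norm e = 1\<close> unfolding p_def by (simp add: norm_prod_def)
  then have "p^2 \<le> 1" using zero_le_power2[of "snd e"] by linarith
  then have "p \<le> 1" using power2_le_imp_le[of p 1] by simp
  have "0 \<le> p" "0 \<le> S" unfolding p_def S_def by simp_all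
  have "\<bar>((0, 0), 1) \<bullet> (x, t)\<bar>
      \<le> h * \<bar>e \<bullet> ((0, 0), 1)\<bar> + sqrt (1 - (e \<bullet> ((0, 0), 1))^2) * sqrt (r2 + \<epsilon>)"
    using \<open>norm e = 1\<close> \<open>(x, t) \<in> shell_slab r2 \<epsilon> h e\<close>
    by (intro shell_slab_height_le) (auto simp: norm_Pair)
  also have "\<dots> = h * \<bar>snd e\<bar> + p * sqrt (r2 + \<epsilon>)"
    using \<open>p^2 + (snd e)^2 = 1\<close> \<open>0 \<le> p\<close> by (simp add: inner_prod_def real_sqrt_unique)
  also have "\<dots> \<le> h * \<bar>snd e\<bar> + p * (S + h)"
  proof -
    have "r2 + \<epsilon> \<le> (S + h)^2"
      using \<open>0 \<le> S\<close> \<open>h \<ge> 0\<close> unfolding S_def by (simp add: power2_eq_square algebra_simps max_def)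
    then have "sqrt (r2 + \<epsilon>) \<le> S + h"
      using \<open>0 \<le> S\<close> \<open>h \<ge> 0\<close> by (metis add_nonneg_nonneg real_sqrt_le_mono real_sqrt_abs abs_of_nonneg)
    then show ?thesis using \<open>0 \<le> p\<close> by (simp add: mult_left_mono)
  qed
  also have "\<dots> \<le> p * S + h * \<bar>snd e\<bar> + h"
    using mult_right_mono[OF \<open>p \<le> 1\<close> \<open>h \<ge> 0\<close>] by (simp add: algebra_simps)
  finally show False using far by (simp add: inner_prod_def p_def S_def)
qed

text \<open>A line \<open>u \<bullet> x + q t = v\<close> with \<open>|u| = p\<close> in the plane at height \<open>t\<close> lies at distance
  \<open>|v - q t| / p\<close> from the centre of that plane, so the right-hand side below is \<open>p\<^sup>2\<close> times
  the squared half-length of its chord in the outer sphere of the shell.\<close>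

lemma slab_chord_depth_ge:
  fixes p q v t r2 \<epsilon> h \<Lambda> d :: real
  assumes "p > 0" "p^2 + q^2 = 1" "\<bar>v\<bar> \<le> h"
    and \<Lambda>: "\<Lambda> = p * sqrt (max (r2 + \<epsilon> - h^2) 0)" and d: "d = \<Lambda> - h * \<bar>q\<bar> - \<bar>t\<bar>" "d > 0"
  shows "\<Lambda> * d \<le> p^2 * (r2 + \<epsilon> - t^2) - (v - q * t)^2"
proof -
  define S where "S = sqrt (max (r2 + \<epsilon> - h^2) 0)"
  define X where "X = h * \<bar>q\<bar> + \<bar>t\<bar>"
  have "0 \<le> X" "X < \<Lambda>" "\<Lambda> = p * S"
    using assms unfolding X_def S_def by auto
  then have "0 < p * S" by linarith
  then have "S > 0" using \<open>p > 0\<close> by (simp add: zero_less_mult_iff)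
  then have S2: "S^2 = r2 + \<epsilon> - h^2" unfolding S_def by (simp add: max_def split: if_splits)
  have p2: "p^2 = 1 - q^2" using assms(2) by simp
  have "p^2 * t^2 + (v - q * t)^2 = t^2 - 2 * q * v * t + v^2"
    unfolding p2 by (simp add: power2_eq_square algebra_simps)
  also have "\<dots> \<le> t^2 + 2 * h * \<bar>q\<bar> * \<bar>t\<bar> + h^2"
  proof -
    have "\<bar>v\<bar> * (\<bar>q\<bar> * \<bar>t\<bar>) \<le> h * (\<bar>q\<bar> * \<bar>t\<bar>)"
      using assms(3) by (rule mult_right_mono) simp
    then have "\<bar>2 * q * v * t\<bar> \<le> 2 * h * \<bar>q\<bar> * \<bar>t\<bar>"
      by (simp add: abs_mult algebra_simps)
    moreover have "v^2 \<le> h^2" using power_mono[OF assms(3) abs_ge_zero, of 2] by simp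
    ultimately show ?thesis by linarith
  qed
  also have "\<dots> = X^2 + h^2 * p^2"
    unfolding p2 X_def by (simp add: power2_eq_square algebra_simps)
  finally have chord: "p^2 * t^2 + (v - q * t)^2 \<le> X^2 + h^2 * p^2" .
  have "X^2 \<le> \<Lambda> * X"
    unfolding power2_eq_square using \<open>0 \<le> X\<close> \<open>X < \<Lambda>\<close> by (intro mult_right_mono) auto
  moreover have "\<Lambda>^2 = p^2 * (r2 + \<epsilon>) - h^2 * p^2"
  proof -
    have "\<Lambda>^2 = p^2 * S^2" using \<open>\<Lambda> = p * S\<close> by (simp add: power_mult_distrib)
    then show ?thesis unfolding S2 by (simp add: algebra_simps)
  qed
  moreover have "\<Lambda> * d = \<Lambda>^2 - \<Lambda> * X"
  proof -
    have "d = \<Lambda> - X" using d unfolding X_def by simp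
    then show ?thesis by (simp add: power2_eq_square right_diff_distrib)
  qed
  moreover have "p^2 * (r2 + \<epsilon> - t^2) = p^2 * (r2 + \<epsilon>) - p^2 * t^2" by (simp add: algebra_simps)
  ultimately show ?thesis using chord by linarith
qed

section \<open>Horizontal slices of a shell slab\<close>

lemma emeasure_line_annulus_le:
  fixes k y \<rho> \<epsilon> :: real
  assumes "\<epsilon> \<ge> 0" and pos: "\<rho> + \<epsilon> - y^2 / (1 + k^2) > 0"
  shows "emeasure lborel {z. \<bar>(y - k * z)^2 + z^2 - \<rho>\<bar> \<le> \<epsilon>}
    \<le> ennreal (4 * \<epsilon> / (sqrt (1 + k^2) * sqrt (\<rho> + \<epsilon> - y^2 / (1 + k^2))))"
proof -
  define \<sigma> where "\<sigma> = 1 + k^2"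
  define K where "K = \<rho> + \<epsilon> - y^2 / \<sigma>"
  have "\<sigma> > 0" unfolding \<sigma>_def by (simp add: add_pos_nonneg)
  have "(y - k * z)^2 + z^2 = \<sigma> * (z - k * y / \<sigma>)^2 + y^2 / \<sigma>" for z
  proof -
    have "(y - k * z)^2 + z^2 = \<sigma> * ((y - k * z)^2 + z^2) / \<sigma>"
      using \<open>\<sigma> > 0\<close> by simp
    also have "\<sigma> * ((y - k * z)^2 + z^2) = (\<sigma> * z - k * y)^2 + y^2"
      unfolding \<sigma>_def by (simp add: power2_eq_square algebra_simps)
    also have "(\<sigma> * z - k * y)^2 = \<sigma> * (\<sigma> * (z - k * y / \<sigma>)^2)"
      using \<open>\<sigma> > 0\<close> by (simp add: field_simps power2_eq_square)
    finally show ?thesis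
      using \<open>\<sigma> > 0\<close> by (simp add: add_divide_distrib)
  qed
  then have "{z. \<bar>(y - k * z)^2 + z^2 - \<rho>\<bar> \<le> \<epsilon>}
      \<subseteq> {z. K - 2 * \<epsilon> \<le> \<sigma> * (z - k * y / \<sigma>)^2 \<and> \<sigma> * (z - k * y / \<sigma>)^2 \<le> K}"
    unfolding K_def by (auto simp: abs_le_iff)
  then have "emeasure lborel {z. \<bar>(y - k * z)^2 + z^2 - \<rho>\<bar> \<le> \<epsilon>}
      \<le> emeasure lborel {z. K - 2 * \<epsilon> \<le> \<sigma> * (z - k * y / \<sigma>)^2 \<and> \<sigma> * (z - k * y / \<sigma>)^2 \<le> K}"
    by (rule emeasure_mono) simp
  also have "\<dots> \<le> ennreal (2 * (2 * \<epsilon>) / (sqrt \<sigma> * sqrt K))"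
    using \<open>\<sigma> > 0\<close> pos \<open>\<epsilon> \<ge> 0\<close> unfolding K_def \<sigma>_def by (intro emeasure_quadratic_shell_le) auto
  finally show ?thesis unfolding K_def \<sigma>_def by simp
qed

lemma emeasure_annulus_chord_le:
  fixes \<alpha> \<beta> p q t r2 \<epsilon> h \<Lambda> d y :: real
  assumes "\<alpha> \<noteq> 0" "\<alpha>^2 + \<beta>^2 = p^2" "p > 0" "p^2 + q^2 = 1" "\<epsilon> \<ge> 0"
    and \<Lambda>: "\<Lambda> = p * sqrt (max (r2 + \<epsilon> - h^2) 0)" and d: "d = \<Lambda> - h * \<bar>q\<bar> - \<bar>t\<bar>" "d > 0"
    and y: "\<bar>\<alpha> * y + q * t\<bar> \<le> h"
  shows "emeasure lborel {z. \<bar>(y - \<beta> / \<alpha> * z)^2 + z^2 + t^2 - r2\<bar> \<le> \<epsilon>}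
    \<le> ennreal (4 * \<epsilon> * p / (sqrt (1 + (\<beta> / \<alpha>)^2) * sqrt (\<Lambda> * d)))"
proof -
  define \<sigma> where "\<sigma> = 1 + (\<beta> / \<alpha>)^2"
  define K where "K = r2 - t^2 + \<epsilon> - y^2 / \<sigma>"
  have "\<sigma> > 0" unfolding \<sigma>_def by (simp add: add_pos_nonneg)
  have "0 \<le> h * \<bar>q\<bar>" using y by simp
  then have "\<Lambda> * d > 0" using d by (intro mult_pos_pos) linarith+
  have "\<alpha>^2 * \<sigma> = p^2"
    using assms(1,2) unfolding \<sigma>_def by (simp add: field_simps)
  have "\<Lambda> * d \<le> p^2 * (r2 + \<epsilon> - t^2) - (\<alpha> * y + q * t - q * t)^2"
    using y by (intro slab_chord_depth_ge[OF \<open>p > 0\<close> assms(4) _ \<Lambda> d])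
  also have "\<dots> = p^2 * K"
    using \<open>\<alpha>^2 * \<sigma> = p^2\<close>[symmetric] \<open>\<sigma> > 0\<close> unfolding K_def by (simp add: field_simps power_mult_distrib)
  finally have depth: "\<Lambda> * d / p^2 \<le> K"
    using \<open>p > 0\<close> by (simp add: divide_le_eq mult.commute)
  moreover have "0 < \<Lambda> * d / p^2" using \<open>\<Lambda> * d > 0\<close> \<open>p > 0\<close> by simp
  ultimately have "0 < K" by linarith
  have "emeasure lborel {z. \<bar>(y - \<beta> / \<alpha> * z)^2 + z^2 + t^2 - r2\<bar> \<le> \<epsilon>}
      \<le> ennreal (4 * \<epsilon> / (sqrt \<sigma> * sqrt K))"
    using emeasure_line_annulus_le[OF \<open>\<epsilon> \<ge> 0\<close>, of "r2 - t^2" y "\<beta> / \<alpha>"] \<open>0 < K\<close>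
    unfolding K_def \<sigma>_def by (simp add: algebra_simps)
  also have "\<dots> \<le> ennreal (4 * \<epsilon> * p / (sqrt \<sigma> * sqrt (\<Lambda> * d)))"
  proof (rule ennreal_leI)
    have "sqrt (\<Lambda> * d) / p \<le> sqrt K"
      using depth \<open>p > 0\<close> by (metis abs_of_pos real_sqrt_abs real_sqrt_divide real_sqrt_le_mono power2_eq_square)
    then have "4 * \<epsilon> / (sqrt \<sigma> * sqrt K) \<le> 4 * \<epsilon> / (sqrt \<sigma> * (sqrt (\<Lambda> * d) / p))"
      using \<open>\<sigma> > 0\<close> \<open>\<Lambda> * d > 0\<close> \<open>p > 0\<close> \<open>\<epsilon> \<ge> 0\<close> \<open>0 < K\<close>
      by (intro divide_left_mono mult_left_mono mult_pos_pos) auto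
    then show "4 * \<epsilon> / (sqrt \<sigma> * sqrt K) \<le> 4 * \<epsilon> * p / (sqrt \<sigma> * sqrt (\<Lambda> * d))"
      using \<open>p > 0\<close> by (simp add: field_simps)
  qed
  finally show ?thesis unfolding \<sigma>_def .
qed

lemma emeasure_annulus_strip_le:
  fixes \<alpha> \<beta> p q t r2 \<epsilon> h \<Lambda> d :: real
  assumes "\<alpha> \<noteq> 0" "\<alpha>^2 + \<beta>^2 = p^2" "p > 0" "p^2 + q^2 = 1" "\<epsilon> \<ge> 0" "h \<ge> 0"
    and \<Lambda>: "\<Lambda> = p * sqrt (max (r2 + \<epsilon> - h^2) 0)" and d: "d = \<Lambda> - h * \<bar>q\<bar> - \<bar>t\<bar>" "d > 0"
  shows "emeasure lborel
      {x :: real \<times> real. \<bar>fst x^2 + snd x^2 + t^2 - r2\<bar> \<le> \<epsilon> \<and> \<bar>\<alpha> * fst x + \<beta> * snd x + q * t\<bar> \<le> h}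
    \<le> ennreal (8 * h * \<epsilon> / sqrt (\<Lambda> * d))"
proof -
  define B where "B = {x :: real \<times> real.
    \<bar>fst x^2 + snd x^2 + t^2 - r2\<bar> \<le> \<epsilon> \<and> \<bar>\<alpha> * fst x + \<beta> * snd x + q * t\<bar> \<le> h}"
  define S where "S = {y. \<bar>\<alpha> * y + q * t\<bar> \<le> h}"
  define c where "c = 4 * \<epsilon> * p / (sqrt (1 + (\<beta> / \<alpha>)^2) * sqrt (\<Lambda> * d))"
  have "closed B" "closed S"
    unfolding B_def S_def by (intro closed_Collect_conj closed_Collect_le continuous_intros)+
  have "0 \<le> h * \<bar>q\<bar>" using \<open>h \<ge> 0\<close> by simp
  then have "0 < \<Lambda> * d" using d by (intro mult_pos_pos) linarith+
  \<comment> \<open>the shear \<open>(y, z) \<mapsto> (y - \<beta> / \<alpha> * z, z)\<close> maps the band \<open>S\<close> onto the strip\<close>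
  have "\<alpha> * (y - \<beta> / \<alpha> * z) + \<beta> * z = \<alpha> * y" for y z
    using assms(1) by (simp add: algebra_simps)
  then have "emeasure lborel {z. (y - \<beta> / \<alpha> * z, z) \<in> B} \<le> ennreal c * indicator S y" for y
    using emeasure_annulus_chord_le[OF assms(1-5) \<Lambda> d, of y] emeasure_mono[of _ _ lborel]
    by (cases "y \<in> S") (fastforce simp: B_def S_def c_def)+
  then have "emeasure lborel B \<le> ennreal c * emeasure lborel S"
    using \<open>closed B\<close> \<open>closed S\<close> by (intro emeasure_le_sheared_fibers borel_closed)
  also have "\<dots> = ennreal c * ennreal (2 * h / \<bar>\<alpha>\<bar>)"
    unfolding S_def using assms(1,6) by (simp add: emeasure_abs_affine_band)
  also have "\<dots> = ennreal (c * (2 * h / \<bar>\<alpha>\<bar>))"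
    using assms(3,5,6) \<open>0 < \<Lambda> * d\<close> by (intro ennreal_mult[symmetric]) (simp_all add: c_def)
  also have "c * (2 * h / \<bar>\<alpha>\<bar>) = 8 * h * \<epsilon> / sqrt (\<Lambda> * d)"
  proof -
    define r where "r = sqrt (1 + (\<beta> / \<alpha>)^2)"
    have "r > 0" unfolding r_def by (simp add: add_pos_nonneg)
    have "(\<bar>\<alpha>\<bar> * r)^2 = p^2"
      using assms(1,2) unfolding r_def by (simp add: power_mult_distrib field_simps)
    then have "\<bar>\<alpha>\<bar> * r = p"
      using \<open>p > 0\<close> \<open>r > 0\<close> by (simp add: power2_eq_iff_nonneg)
    have "c * (2 * h / \<bar>\<alpha>\<bar>) = 8 * h * \<epsilon> * p / ((\<bar>\<alpha>\<bar> * r) * sqrt (\<Lambda> * d))"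
      unfolding c_def r_def[symmetric] using assms(1) \<open>r > 0\<close> \<open>0 < \<Lambda> * d\<close> by (simp add: field_simps)
    then show ?thesis
      unfolding \<open>\<bar>\<alpha>\<bar> * r = p\<close> using \<open>p > 0\<close> by simp
  qed
  finally show ?thesis unfolding B_def .
qed

lemma emeasure_shell_slab_slice_le:
  fixes e :: "(real \<times> real) \<times> real"
  assumes "norm e = 1" "\<epsilon> \<ge> 0" "h \<ge> 0"
    and \<Lambda>: "\<Lambda> = norm (fst e) * sqrt (max (r2 + \<epsilon> - h^2) 0)"
    and d: "d = \<Lambda> - h * \<bar>snd e\<bar> - \<bar>t\<bar>" "d > 0"
  shows "emeasure lborel {x. (x, t) \<in> shell_slab r2 \<epsilon> h e} \<le> ennreal (8 * h * \<epsilon> / sqrt (\<Lambda> * d))"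
proof -
  define \<alpha> \<beta> q where "\<alpha> = fst (fst e)" "\<beta> = snd (fst e)" "q = snd e"
  then have e: "e = ((\<alpha>, \<beta>), q)" by simp
  define p where "p = norm (fst e)"
  have p2: "\<alpha>^2 + \<beta>^2 = p^2" unfolding p_def e by (simp add: norm_Pair)
  have "p^2 + q^2 = 1" using \<open>norm e = 1\<close> unfolding p_def e by (simp add: norm_Pair)
  have "0 \<le> h * \<bar>q\<bar>" using \<open>h \<ge> 0\<close> by simp
  then have "\<Lambda> > 0" using d e by simp
  then have "p > 0" using \<Lambda> unfolding p_def by (simp add: zero_less_mult_iff)
  have norm_sq: "(norm x)^2 = fst x^2 + snd x^2" for x :: "real \<times> real"
    by (simp add: norm_prod_def)
  have slice: "{x. (x, t) \<in> shell_slab r2 \<epsilon> h e} =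
    {x. \<bar>fst x^2 + snd x^2 + t^2 - r2\<bar> \<le> \<epsilon> \<and> \<bar>\<alpha> * fst x + \<beta> * snd x + q * t\<bar> \<le> h}"
    by (simp only: mem_shell_slab_Pair e inner_prod_def norm_sq fst_conv snd_conv inner_real_def)
  note strip = emeasure_annulus_strip_le[OF _ _ \<open>p > 0\<close> \<open>p^2 + q^2 = 1\<close> \<open>\<epsilon> \<ge> 0\<close> \<open>h \<ge> 0\<close>
      \<Lambda>[folded p_def] d[unfolded e snd_conv]]
  show ?thesis
  proof (cases "\<alpha> = 0")
    case False
    then show ?thesis unfolding slice by (rule strip[OF _ p2])
  next
    case True
    then have "\<beta> \<noteq> 0" using p2 \<open>p > 0\<close> by auto
    let ?B = "{x :: real \<times> real. \<bar>fst x^2 + snd x^2 + t^2 - r2\<bar> \<le> \<epsilon> \<and> \<bar>\<beta> * fst x + \<alpha> * snd x + q * t\<bar> \<le> h}"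
    have "closed ?B" by (intro closed_Collect_conj closed_Collect_le continuous_intros)
    have swap: "{x. (x, t) \<in> shell_slab r2 \<epsilon> h e} = {(y, x). (x, y) \<in> ?B}"
      unfolding slice True by (auto simp: add.commute)
    have "emeasure lborel {x. (x, t) \<in> shell_slab r2 \<epsilon> h e} = emeasure lborel ?B"
      unfolding swap using \<open>closed ?B\<close> by (intro emeasure_lborel_swap borel_closed)
    also have "\<dots> \<le> ennreal (8 * h * \<epsilon> / sqrt (\<Lambda> * d))"
      using p2 by (intro strip[OF \<open>\<beta> \<noteq> 0\<close>]) (simp add: add.commute)
    finally show ?thesis .
  qed
qed

lemma emeasure_shell_slab_slice_annulus_le:
  fixes e :: "(real \<times> real) \<times> real"
  assumes "\<epsilon> \<ge> 0"
  shows "emeasure lborel {x. (x, t) \<in> shell_slab r2 \<epsilon> h e} \<le> ennreal (2 * pi * \<epsilon>)"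
proof -
  have "{x. (x, t) \<in> shell_slab r2 \<epsilon> h e} \<subseteq> {x :: real \<times> real. \<bar>(norm x)^2 - (r2 - t^2)\<bar> \<le> \<epsilon>}"
    by (auto simp: mem_shell_slab_Pair algebra_simps)
  then have "emeasure lborel {x. (x, t) \<in> shell_slab r2 \<epsilon> h e}
      \<le> emeasure lborel {x :: real \<times> real. \<bar>(norm x)^2 - (r2 - t^2)\<bar> \<le> \<epsilon>}"
    by (rule emeasure_mono) simp
  also have "\<dots> \<le> ennreal (2 * pi * \<epsilon>)"
    using assms by (rule emeasure_planar_annulus_le)
  finally show ?thesis .
qed

lemma nn_integral_int_profile_le:
  fixes \<mu> :: "real \<Rightarrow> ennreal" and s D \<Lambda> K c L :: real
  assumes "0 \<le> \<Lambda>" "D \<le> \<Lambda>" "0 \<le> K" "0 \<le> c" "0 \<le> L"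
    and core: "\<And>t. \<bar>t\<bar> < D - 1 \<Longrightarrow> \<mu> t \<le> ennreal (K / sqrt (D - \<bar>t\<bar>))"
    and bounded: "\<And>t. \<mu> t \<le> ennreal c"
    and tail: "\<And>t. D - 1 + L < \<bar>t\<bar> \<Longrightarrow> \<mu> t = 0"
  shows "(\<integral>\<^sup>+n. \<mu> (real_of_int n - s) \<partial>count_space UNIV) \<le> ennreal (4 * K * sqrt \<Lambda> + 2 * (L + 1) * c)"
proof -
  define M where "M = {n::int. \<bar>real_of_int n - s\<bar> < D - 1}"
  define E where "E = {n::int. D - 1 \<le> \<bar>real_of_int n - s\<bar> \<and> \<bar>real_of_int n - s\<bar> \<le> D - 1 + L}"
  define f where "f n = (if n \<in> M then K / sqrt (D - \<bar>real_of_int n - s\<bar>) else if n \<in> E then c else 0)" for n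
  have "M \<subseteq> {n. \<bar>real_of_int n - s\<bar> \<le> \<bar>D - 1\<bar> + L}" "E \<subseteq> {n. \<bar>real_of_int n - s\<bar> \<le> \<bar>D - 1\<bar> + L}"
    using \<open>0 \<le> L\<close> unfolding M_def E_def by auto
  then have "finite M" "finite E"
    by (auto intro: finite_subset[OF _ finite_int_abs_le])
  have "M \<inter> E = {}" by (auto simp: M_def E_def)
  have f_nonneg: "0 \<le> f n" for n
    using \<open>0 \<le> K\<close> \<open>0 \<le> c\<close> unfolding f_def M_def by auto
  have "\<mu> (real_of_int n - s) \<le> ennreal (f n)" for n
    using core[of "real_of_int n - s"] bounded[of "real_of_int n - s"] tail[of "real_of_int n - s"]
    unfolding f_def M_def E_def by (auto simp: not_less)
  then have "(\<integral>\<^sup>+n. \<mu> (real_of_int n - s) \<partial>count_space UNIV) \<le> (\<integral>\<^sup>+n. ennreal (f n) \<partial>count_space UNIV)"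
    by (intro nn_integral_mono)
  also have "\<dots> = (\<Sum>n\<in>M \<union> E. ennreal (f n))"
    using \<open>finite M\<close> \<open>finite E\<close> by (intro nn_integral_count_space') (auto simp: f_def)
  also have "\<dots> = ennreal ((\<Sum>n\<in>M. f n) + (\<Sum>n\<in>E. f n))"
    using f_nonneg \<open>finite M\<close> \<open>finite E\<close> \<open>M \<inter> E = {}\<close>
    by (simp add: sum.union_disjoint sum_nonneg)
  also have "\<dots> \<le> ennreal (4 * K * sqrt \<Lambda> + 2 * (L + 1) * c)"
  proof (rule ennreal_leI)
    have "(\<Sum>n\<in>M. f n) = K * (\<Sum>n\<in>M. 1 / sqrt (D - \<bar>real_of_int n - s\<bar>))"
      unfolding sum_distrib_left by (intro sum.cong) (simp_all add: f_def)
    also have "\<dots> \<le> K * (4 * sqrt \<Lambda>)"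
      using \<open>finite M\<close> assms(1-3)
      by (intro mult_left_mono sum_inverse_sqrt_dist_le) (auto simp: M_def)
    finally have M_sum: "(\<Sum>n\<in>M. f n) \<le> 4 * K * sqrt \<Lambda>" by simp
    have "(\<Sum>n\<in>E. f n) = (\<Sum>n\<in>E. c)"
      using \<open>M \<inter> E = {}\<close> by (intro sum.cong) (auto simp: f_def)
    also have "\<dots> = c * card E" by simp
    also have "\<dots> \<le> c * (2 * (L + 1))"
      unfolding E_def using \<open>0 \<le> c\<close> \<open>0 \<le> L\<close> by (intro mult_left_mono card_int_abs_band_le)
    finally show "(\<Sum>n\<in>M. f n) + (\<Sum>n\<in>E. f n) \<le> 4 * K * sqrt \<Lambda> + 2 * (L + 1) * c"
      using M_sum by (simp add: mult.commute)
  qed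
  finally show ?thesis .
qed

lemma nn_integral_shell_slab_slices_le:
  fixes e :: "(real \<times> real) \<times> real"
  assumes "norm e = 1" "\<epsilon> \<ge> 0" "h \<ge> 0"
  shows "(\<integral>\<^sup>+n. emeasure lborel {x. (x, real_of_int n - s) \<in> shell_slab r2 \<epsilon> h e} \<partial>count_space UNIV)
    \<le> ennreal ((32 * h + 4 * pi * (3 * h + 2)) * \<epsilon>)"
proof -
  define W where "W = shell_slab r2 \<epsilon> h e"
  define \<Lambda> where "\<Lambda> = norm (fst e) * sqrt (max (r2 + \<epsilon> - h^2) 0)"
  define D where "D = \<Lambda> - h * \<bar>snd e\<bar>"
  have "\<bar>snd e\<bar> \<le> 1" using norm_snd_le[of "snd e" "fst e"] \<open>norm e = 1\<close> by simp
  have "0 \<le> \<Lambda>" "D \<le> \<Lambda>" unfolding \<Lambda>_def D_def using \<open>h \<ge> 0\<close> by simp_all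
  have "(\<integral>\<^sup>+n. emeasure lborel {x. (x, real_of_int n - s) \<in> W} \<partial>count_space UNIV)
      \<le> ennreal (4 * (8 * h * \<epsilon> / sqrt \<Lambda>) * sqrt \<Lambda> + 2 * ((3 * h + 1) + 1) * (2 * pi * \<epsilon>))"
  proof (rule nn_integral_int_profile_le[where \<mu> = "\<lambda>t. emeasure lborel {x. (x, t) \<in> W}"])
    fix t :: real
    assume "\<bar>t\<bar> < D - 1"
    then have "emeasure lborel {x. (x, t) \<in> W} \<le> ennreal (8 * h * \<epsilon> / sqrt (\<Lambda> * (D - \<bar>t\<bar>)))"
      unfolding W_def using assms
      by (intro emeasure_shell_slab_slice_le[of _ _ _ _ _ "D - \<bar>t\<bar>"]) (auto simp: \<Lambda>_def D_def)
    then show "emeasure lborel {x. (x, t) \<in> W} \<le> ennreal (8 * h * \<epsilon> / sqrt \<Lambda> / sqrt (D - \<bar>t\<bar>))"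
      by (simp add: real_sqrt_mult)
  next
    fix t :: real
    show "emeasure lborel {x. (x, t) \<in> W} \<le> ennreal (2 * pi * \<epsilon>)"
      unfolding W_def using \<open>\<epsilon> \<ge> 0\<close> by (rule emeasure_shell_slab_slice_annulus_le)
  next
    fix t :: real
    assume "D - 1 + (3 * h + 1) < \<bar>t\<bar>"
    moreover have "h * \<bar>snd e\<bar> \<le> h" using mult_left_mono[OF \<open>\<bar>snd e\<bar> \<le> 1\<close> \<open>h \<ge> 0\<close>] by simp
    ultimately have "(x, t) \<notin> W" for x
      unfolding W_def using assms by (intro shell_slab_slice_empty) (auto simp: D_def \<Lambda>_def)
    then show "emeasure lborel {x. (x, t) \<in> W} = 0" by simp
  qed (use \<open>0 \<le> \<Lambda>\<close> \<open>D \<le> \<Lambda>\<close> \<open>\<epsilon> \<ge> 0\<close> \<open>h \<ge> 0\<close> in auto)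
  also have "\<dots> \<le> ennreal ((32 * h + 4 * pi * (3 * h + 2)) * \<epsilon>)"
  proof (rule ennreal_leI)
    \<comment> \<open>for \<open>\<Lambda> = 0\<close> the left-hand side is \<open>0\<close>, as \<open>x / 0 = 0\<close>\<close>
    have "4 * (8 * h * \<epsilon> / sqrt \<Lambda>) * sqrt \<Lambda> \<le> 32 * h * \<epsilon>"
      using \<open>h \<ge> 0\<close> \<open>\<epsilon> \<ge> 0\<close> by (cases "\<Lambda> = 0") simp_all
    then show "4 * (8 * h * \<epsilon> / sqrt \<Lambda>) * sqrt \<Lambda> + 2 * ((3 * h + 1) + 1) * (2 * pi * \<epsilon>)
        \<le> (32 * h + 4 * pi * (3 * h + 2)) * \<epsilon>"
      by (simp add: algebra_simps)
  qed
  finally show ?thesis unfolding W_def .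
qed

section \<open>The sets U and V\<close>

lemma Uset_subset_shell_slab:
  assumes "3 \<le> cs" "1 < T" and a: "a \<in> Vset cs ctr" and b: "b \<in> Vset cs ctr"
  shows "midpoint a b \<noteq> 0"
    and "Uset cs T a b \<subseteq>
      {z. z - midpoint a b \<in> shell_slab ((norm (a - b))^2 / 4) (1 / T) 5 (sgn (midpoint a b))}"
proof -
  have "dist a b \<le> dist ctr a + dist ctr b" by (rule dist_triangle3)
  then have ab: "norm (a - b) \<le> cs / 50" using a b by (simp add: Vset_def dist_norm)
  have \<epsilon>: "1 / T \<le> 1" using \<open>1 < T\<close> by simp
  have "cs - 1 \<le> norm a" "norm a \<le> cs + 1" "cs - 1 \<le> norm b" "norm b \<le> cs + 1"
    using a b by (simp_all add: Vset_def)
  note slab = midpoint_shell_slab[OF \<open>3 \<le> cs\<close> \<epsilon> this ab]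
  show "midpoint a b \<noteq> 0" using slab(1) \<open>3 \<le> cs\<close> by fastforce
  show "Uset cs T a b \<subseteq> {z. z - midpoint a b \<in> shell_slab ((norm (a - b))^2 / 4) (1 / T) 5 (sgn (midpoint a b))}"
    using slab(2) by (auto simp: Uset_def)
qed

lemma nn_integral_slice_le_translate:
  fixes U W :: "('a::euclidean_space \<times> real) set"
  assumes "U \<subseteq> {z. z - m \<in> W}" "closed W"
  shows "(\<integral>\<^sup>+x. indicator U (x, t) \<partial>lborel) \<le> emeasure lborel {x. (x, t - snd m) \<in> W}"
proof -
  define A where "A = {x. (x, t - snd m) \<in> W}"
  have "A = (\<lambda>x. (x, t - snd m)) -` W" unfolding A_def by auto
  then have "closed A" using \<open>closed W\<close> by (auto intro!: continuous_closed_vimage continuous_intros)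
  then have A_borel [measurable]: "A \<in> sets borel" by (rule borel_closed)
  have "(x - fst m, t - snd m) = (x, t) - m" for x by (simp add: prod_eq_iff)
  then have "(\<integral>\<^sup>+x. indicator U (x, t) \<partial>lborel) \<le> (\<integral>\<^sup>+x. indicator {x. x - fst m \<in> A} x \<partial>lborel)"
    using assms(1) by (intro nn_integral_mono) (auto simp: A_def split: split_indicator)
  also have "\<dots> = emeasure lborel {x. x - fst m \<in> A}"
    by (intro nn_integral_indicator) measurable
  also have "\<dots> = emeasure lborel A"
    by (rule emeasure_lborel_translate[OF A_borel])
  finally show ?thesis unfolding A_def .
qed

theorem mainTheorem9:
  shows "\<exists>N0 C::real. N0 \<ge> 1 \<and> C > 0 \<and>
    (\<forall>cs T::real. \<forall>ctr :: (real \<times> real) \<times> real. \<forall>a b.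
      cs \<ge> N0 \<longrightarrow> T > 1 \<longrightarrow> a \<in> Vset cs ctr \<longrightarrow> b \<in> Vset cs ctr \<longrightarrow>
      (\<integral>\<^sup>+ n. (\<integral>\<^sup>+ xi. indicator (Uset cs T a b) (xi, real_of_int n) \<partial>lborel) \<partial>count_space (UNIV :: int set))
        \<le> ennreal (C / T))"
proof (rule exI[of _ 3], rule exI[of _ "160 + 68 * pi"], intro conjI allI impI)
  fix cs T :: real and ctr a b :: "(real \<times> real) \<times> real"
  assume "3 \<le> cs" "1 < T" "a \<in> Vset cs ctr" "b \<in> Vset cs ctr"
  define m where "m = midpoint a b"
  define W where "W = shell_slab ((norm (a - b))^2 / 4) (1 / T) 5 (sgn m)"
  note U = Uset_subset_shell_slab[OF \<open>3 \<le> cs\<close> \<open>1 < T\<close> \<open>a \<in> Vset cs ctr\<close> \<open>b \<in> Vset cs ctr\<close>,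
      folded m_def W_def]
  have "(\<integral>\<^sup>+n. \<integral>\<^sup>+xi. indicator (Uset cs T a b) (xi, real_of_int n) \<partial>lborel \<partial>count_space UNIV)
      \<le> (\<integral>\<^sup>+n. emeasure lborel {x. (x, real_of_int n - snd m) \<in> W} \<partial>count_space UNIV)"
    using U(2) by (intro nn_integral_mono nn_integral_slice_le_translate) (simp_all add: W_def closed_shell_slab)
  also have "\<dots> \<le> ennreal ((32 * 5 + 4 * pi * (3 * 5 + 2)) * (1 / T))"
    unfolding W_def using U(1) \<open>1 < T\<close> by (intro nn_integral_shell_slab_slices_le) (simp_all add: norm_sgn)
  also have "\<dots> = ennreal ((160 + 68 * pi) / T)" by simp
  finally show "(\<integral>\<^sup>+n. \<integral>\<^sup>+xi. indicator (Uset cs T a b) (xi, real_of_int n) \<partial>lborel \<partial>count_space UNIV)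
      \<le> ennreal ((160 + 68 * pi) / T)" .
qed (simp_all add: add_pos_pos)

end
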